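(* Consider the linear time-invariant system $\dot x(t) = Ax(t) + Bu(t) + Ed(t)$, $z(t) = Hx(t)$ with $A\in\mathbb{R}^{n\times n}$, $B\in\mathbb{R}^{n\times m}$, $E\in\mathbb{R}^{n\times \ell}$, $H\in\mathbb{R}^{p\times n}$, under linear state feedback $u(t)=Fx(t)$ with $F\in\mathbb{R}^{m\times n}$. Let $g(t) = He^{(A+BF)t}E$ be the impulse response from $d$ to $z$ and define $\|g\|_{H_2}^2 = \int_0^\infty \mathrm{Tr}(g(\tau)^\top g(\tau))\,d\tau$. Then $\|g\|_{H_2}^2 = 0$ if and only if there exist an integer $k$ and matrices $X\in\mathbb{R}^{k\times k}$, $V\in\mathbb{R}^{n\times k}$ such that $$VX - BFV = AV, \qquad \operatorname{im} E \subseteq \operatorname{im} V \subseteq \ker H.$$ (No internal stability of $A+BF$ is assumed.)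
   Context: $\operatorname{im}$ and $\ker$ denote image and kernel of a matrix. The $H_2$ norm is defined by the (possibly infinite) integral above, without requiring $A+BF$ to be Hurwitz. *)

theory Defs
  imports "HOL-Analysis.Analysis" "Jordan_Normal_Form.Matrix_Kernel"
begin

definition mat_exp :: "real mat \<Rightarrow> real mat" where
  "mat_exp M = mat (dim_row M) (dim_col M)
     (\<lambda>(i,j). \<Sum>k. (M ^\<^sub>m k) $$ (i,j) / fact k)"

definition mat_trace :: "real mat \<Rightarrow> real" where
  "mat_trace M = (\<Sum>i<dim_row M. M $$ (i,i))"

definition mat_image :: "real mat \<Rightarrow> real vec set" where
  "mat_image M = {M *\<^sub>v x | x. x \<in> carrier_vec (dim_col M)}"

definition impulse_response ::
  "real mat \<Rightarrow> real mat \<Rightarrow> real mat \<Rightarrow> real mat \<Rightarrow> real mat \<Rightarrow> real \<Rightarrow> real mat" where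
  "impulse_response A B E H F t = H * mat_exp (t \<cdot>\<^sub>m (A + B * F)) * E"

definition H2_norm_sq :: "(real \<Rightarrow> real mat) \<Rightarrow> ennreal" where
  "H2_norm_sq g = (\<integral>\<^sup>+ t \<in> {0..}. ennreal (mat_trace ((g t)\<^sup>T * g t)) \<partial>lborel)"

end

theory Submission
  imports Defs
begin

(* Write M = A + B F. The entries of g(t) = H exp(M t) E are everywhere convergent power series
   whose coefficients are the entries of the Markov parameters H M^k E divided by k!. The integrand
   tr(g(t)^T g(t)) is the sum of the squares of these entries, a continuous nonnegative function,
   so the H2 norm vanishes iff g vanishes on [0, oo); a power series vanishing on [0, oo) has
   all its one-sided derivatives at 0 equal to zero, so this happens iff H M^k E = 0 for all k.
   Finally, H M^k E = 0 for all k iff some M-invariant subspace im V lies between im E and ker H: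
   for V take finitely many vectors M^k E x spanning the reachable subspace of (M, E), and
   conversely M V = V X gives H M^k E = (H V) X^k Y = 0 when E = V Y. *)

section \<open>Invariant subspaces and Markov parameters\<close>

lemma set_cols_subset_mat_image: "set (cols A) \<subseteq> mat_image A"
proof
  fix v assume "v \<in> set (cols A)"
  then obtain j where j: "j < dim_col A" "v = col A j" by (auto simp: cols_def)
  have "col A j = A *\<^sub>v unit_vec (dim_col A) j"
    using j(1) by (intro eq_vecI) (auto simp: scalar_prod_right_unit)
  then show "v \<in> mat_image A" using j unfolding mat_image_def by auto
qed

lemma mat_factor_if_cols_in_mat_image:
  assumes A: "A \<in> carrier_mat n l" and V: "V \<in> carrier_mat n k"
    and cols: "set (cols A) \<subseteq> mat_image V"
  shows "\<exists>X \<in> carrier_mat k l. A = V * X"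
proof -
  have "\<exists>x. x \<in> carrier_vec k \<and> col A j = V *\<^sub>v x" if "j < l" for j
  proof -
    have "col A j \<in> mat_image V" using cols A that by (auto simp: cols_def)
    then show ?thesis using V unfolding mat_image_def by auto
  qed
  then obtain x where x: "\<And>j. j < l \<Longrightarrow> x j \<in> carrier_vec k \<and> col A j = V *\<^sub>v x j"
    by metis
  define X where "X = mat_of_cols k (map x [0..<l])"
  have "A = V * X"
    by (rule mat_col_eqI) (use A V x in \<open>auto simp: X_def\<close>)
  then show ?thesis by (intro bexI[of _ X]) (auto simp: X_def)
qed

lemma mult_eq_0_iff_cols_in_mat_kernel:
  fixes H V :: "'a :: comm_ring_1 mat"
  assumes H: "H \<in> carrier_mat p n" and V: "V \<in> carrier_mat n k"
  shows "H * V = 0\<^sub>m p k \<longleftrightarrow> set (cols V) \<subseteq> mat_kernel H"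
proof
  assume "H * V = 0\<^sub>m p k"
  then have "H *\<^sub>v col V j = 0\<^sub>v p" if "j < k" for j
    using H V that by (metis col_mult2 col_zero)
  then show "set (cols V) \<subseteq> mat_kernel H"
    using H V by (auto simp: cols_def intro!: mat_kernelI)
next
  assume cols: "set (cols V) \<subseteq> mat_kernel H"
  show "H * V = 0\<^sub>m p k"
  proof (rule mat_col_eqI)
    fix j assume j: "j < dim_col (0\<^sub>m p k :: 'a mat)"
    then have "col V j \<in> mat_kernel H" using cols V by (auto simp: cols_def)
    then have "H *\<^sub>v col V j = 0\<^sub>v p" by (rule mat_kernelD(2)[OF H])
    then show "col (H * V) j = col (0\<^sub>m p k) j" using H V j by (metis col_mult2 col_zero index_zero_mat(3))
  qed (use H V in auto)
qed

lemma mat_image_subset_mat_kernel_iff: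
  assumes H: "H \<in> carrier_mat p n" and V: "V \<in> carrier_mat n k"
  shows "mat_image V \<subseteq> mat_kernel H \<longleftrightarrow> H * V = 0\<^sub>m p k"
proof
  assume "mat_image V \<subseteq> mat_kernel H"
  then show "H * V = 0\<^sub>m p k"
    using set_cols_subset_mat_image mult_eq_0_iff_cols_in_mat_kernel[OF H V] by blast
next
  assume HV: "H * V = 0\<^sub>m p k"
  show "mat_image V \<subseteq> mat_kernel H"
  proof
    fix v assume "v \<in> mat_image V"
    then obtain x where x: "x \<in> carrier_vec k" "v = V *\<^sub>v x" using V unfolding mat_image_def by auto
    then have "H *\<^sub>v v = (H * V) *\<^sub>v x" using H V by (simp add: assoc_mult_mat_vec)
    also have "\<dots> = 0\<^sub>v p" using HV x by (intro eq_vecI) auto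
    finally have "H *\<^sub>v v = 0\<^sub>v p" .
    then show "v \<in> mat_kernel H" using H V x by (auto intro: mat_kernelI)
  qed
qed

lemma ex_spanning_mat_with_cols_in:
  fixes S :: "real vec set"
  assumes S: "S \<subseteq> carrier_vec n"
  shows "\<exists>k V. V \<in> carrier_mat n k \<and> set (cols V) \<subseteq> S \<and> S \<subseteq> mat_image V"
proof -
  interpret vec_space "TYPE(real)" n .
  let ?indep = "\<lambda>T. T \<subseteq> S \<and> lin_indpt T"
  have bound: "finite T \<and> card T \<le> n" if "?indep T" for T
    using li_le_dim[of T] that S dim_is_n by auto
  have "?indep {}" by (simp add: lin_dep_def)
  then obtain T where T: "finite T" "maximal T ?indep"
    using maximal_exists[of ?indep n "{}"] bound by blast
  then have TS: "T \<subseteq> S" and T_indep: "lin_indpt T" unfolding maximal_def by auto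
  have "S \<subseteq> span T"
  proof
    fix v assume v: "v \<in> S"
    show "v \<in> span T"
    proof (rule ccontr)
      assume v_span: "v \<notin> span T"
      have "v \<notin> T" using v_span in_own_span[of T] TS S by auto
      then have "lin_indpt (T \<union> {v})"
        using lin_dep_iff_in_span[of T v] v_span T_indep TS S v by auto
      then have "T \<union> {v} = T" using T(2) TS v unfolding maximal_def by blast
      with \<open>v \<notin> T\<close> show False by blast
    qed
  qed
  obtain ws where ws: "set ws = T" using finite_list[OF T(1)] by blast
  define V where "V = mat_of_cols n ws"
  have V: "V \<in> carrier_mat n (length ws)" unfolding V_def by simp
  have cols_V: "cols V = ws" using ws TS S unfolding V_def by auto
  have "mat_image V = span T"
    using col_space_eq[OF V] V ws unfolding col_space_def cols_V mat_image_def by auto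
  moreover have "set (cols V) \<subseteq> S" using cols_V ws TS by simp
  ultimately show ?thesis
    using V \<open>S \<subseteq> span T\<close> by (intro exI[of _ "length ws"] exI[of _ V]) simp
qed

lemma pow_mat_mult_intertwine:
  assumes M: "M \<in> carrier_mat n n" and V: "V \<in> carrier_mat n k" and X: "X \<in> carrier_mat k k"
    and MV: "M * V = V * X"
  shows "M ^\<^sub>m i * V = V * X ^\<^sub>m i"
proof (induction i)
  case 0
  then show ?case using M V X by simp
next
  case (Suc i)
  have "M ^\<^sub>m Suc i * V = M ^\<^sub>m i * (M * V)"
    using M V by (simp add: assoc_mult_mat[of _ n n M n V k])
  also have "\<dots> = (M ^\<^sub>m i * V) * X"
    using M V X by (simp add: MV assoc_mult_mat[of "M ^\<^sub>m i" n n V k X k])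
  also have "\<dots> = V * X ^\<^sub>m Suc i"
    using V X by (simp add: Suc assoc_mult_mat[of V n k "X ^\<^sub>m i" k X k])
  finally show ?case .
qed

lemma invariant_subspace_imp_markov_parameters_zero:
  fixes M E H V X :: "real mat"
  assumes M: "M \<in> carrier_mat n n" and E: "E \<in> carrier_mat n l" and H: "H \<in> carrier_mat p n"
    and V: "V \<in> carrier_mat n k" and X: "X \<in> carrier_mat k k" and MV: "M * V = V * X"
    and E_V: "mat_image E \<subseteq> mat_image V" and V_H: "mat_image V \<subseteq> mat_kernel H"
  shows "H * M ^\<^sub>m i * E = 0\<^sub>m p l"
proof -
  obtain Y where Y: "Y \<in> carrier_mat k l" and EY: "E = V * Y"
    using mat_factor_if_cols_in_mat_image[OF E V] set_cols_subset_mat_image E_V by blast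
  have HV: "H * V = 0\<^sub>m p k" using mat_image_subset_mat_kernel_iff[OF H V] V_H by blast
  have "H * M ^\<^sub>m i * E = H * (M ^\<^sub>m i * V) * Y"
    using H M V Y unfolding EY
    by (simp add: assoc_mult_mat[of "H * M ^\<^sub>m i" p n V k Y l, symmetric]
        assoc_mult_mat[of H p n "M ^\<^sub>m i" n V k])
  also have "\<dots> = (H * V) * X ^\<^sub>m i * Y"
    using H V X unfolding pow_mat_mult_intertwine[OF M V X MV]
    by (simp add: assoc_mult_mat[of H p n V k "X ^\<^sub>m i" k])
  also have "\<dots> = 0\<^sub>m p l" using X Y unfolding HV by simp
  finally show ?thesis .
qed

lemma markov_parameters_zero_imp_invariant_subspace:
  fixes M E H :: "real mat"
  assumes M: "M \<in> carrier_mat n n" and E: "E \<in> carrier_mat n l" and H: "H \<in> carrier_mat p n"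
    and zero: "\<And>i. H * M ^\<^sub>m i * E = 0\<^sub>m p l"
  shows "\<exists>k X V. X \<in> carrier_mat k k \<and> V \<in> carrier_mat n k \<and> M * V = V * X \<and>
    mat_image E \<subseteq> mat_image V \<and> mat_image V \<subseteq> mat_kernel H"
proof -
  define S where "S = {(M ^\<^sub>m i * E) *\<^sub>v x | i x. x \<in> carrier_vec l}"
  have S_carrier: "S \<subseteq> carrier_vec n"
    unfolding S_def using mult_mat_vec_carrier[OF mult_carrier_mat[OF pow_carrier_mat[OF M] E]] by blast
  have E_S: "mat_image E \<subseteq> S"
  proof
    fix v assume "v \<in> mat_image E"
    then obtain x where "x \<in> carrier_vec l" "v = (M ^\<^sub>m 0 * E) *\<^sub>v x"
      using M E unfolding mat_image_def by auto
    then show "v \<in> S" unfolding S_def by blast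
  qed
  have M_S: "M *\<^sub>v v \<in> S" if "v \<in> S" for v
  proof -
    from that obtain i x where x: "x \<in> carrier_vec l" and v: "v = (M ^\<^sub>m i * E) *\<^sub>v x"
      unfolding S_def by blast
    have comm: "M * M ^\<^sub>m i = M ^\<^sub>m i * M"
      using pow_mat_mult_intertwine[OF M M M refl, of i] by simp
    have "M *\<^sub>v v = (M * (M ^\<^sub>m i * E)) *\<^sub>v x"
      unfolding v by (rule assoc_mult_mat_vec[symmetric, OF M mult_carrier_mat[OF pow_carrier_mat[OF M] E] x])
    also have "M * (M ^\<^sub>m i * E) = M ^\<^sub>m Suc i * E"
      using M E comm by (simp add: assoc_mult_mat[of M n n _ n E l, symmetric])
    finally show ?thesis using x unfolding S_def by blast
  qed
  have S_H: "S \<subseteq> mat_kernel H"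
  proof
    fix v assume "v \<in> S"
    then obtain i x where x: "x \<in> carrier_vec l" and v: "v = (M ^\<^sub>m i * E) *\<^sub>v x"
      unfolding S_def by blast
    have "H *\<^sub>v v = (H * (M ^\<^sub>m i * E)) *\<^sub>v x"
      unfolding v by (rule assoc_mult_mat_vec[symmetric, OF H mult_carrier_mat[OF pow_carrier_mat[OF M] E] x])
    also have "H * (M ^\<^sub>m i * E) = 0\<^sub>m p l"
      using H M E zero[of i] by (simp add: assoc_mult_mat[of H p n _ n E l])
    also have "0\<^sub>m p l *\<^sub>v x = 0\<^sub>v p" using x by (intro eq_vecI) auto
    finally have "H *\<^sub>v v = 0\<^sub>v p" .
    then show "v \<in> mat_kernel H" using H S_carrier \<open>v \<in> S\<close> by (auto intro: mat_kernelI)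
  qed
  obtain k V where V: "V \<in> carrier_mat n k" and V_S: "set (cols V) \<subseteq> S" and S_V: "S \<subseteq> mat_image V"
    using ex_spanning_mat_with_cols_in[OF S_carrier] by blast
  have "set (cols (M * V)) \<subseteq> S"
  proof
    fix w assume "w \<in> set (cols (M * V))"
    then obtain j where j: "j < k" and w: "w = col (M * V) j" using M V by (auto simp: cols_def)
    have "col V j \<in> S" using V_S j V by (auto simp: cols_def)
    then show "w \<in> S" unfolding w col_mult2[OF M V j] by (rule M_S)
  qed
  then obtain X where X: "X \<in> carrier_mat k k" and MV: "M * V = V * X"
    using mat_factor_if_cols_in_mat_image[of "M * V" n k V k] M V S_V by auto
  have "H * V = 0\<^sub>m p k"
    using mult_eq_0_iff_cols_in_mat_kernel[OF H V] V_S S_H by blast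
  then have "mat_image V \<subseteq> mat_kernel H"
    using mat_image_subset_mat_kernel_iff[OF H V] by blast
  then show ?thesis using X V MV E_S S_V by blast
qed

lemma markov_parameters_zero_iff_invariant_subspace:
  fixes M E H :: "real mat"
  assumes M: "M \<in> carrier_mat n n" and E: "E \<in> carrier_mat n l" and H: "H \<in> carrier_mat p n"
  shows "(\<forall>i. H * M ^\<^sub>m i * E = 0\<^sub>m p l) \<longleftrightarrow>
    (\<exists>k X V. X \<in> carrier_mat k k \<and> V \<in> carrier_mat n k \<and> M * V = V * X \<and>
      mat_image E \<subseteq> mat_image V \<and> mat_image V \<subseteq> mat_kernel H)"
proof
  assume "\<forall>i. H * M ^\<^sub>m i * E = 0\<^sub>m p l"
  then show "\<exists>k X V. X \<in> carrier_mat k k \<and> V \<in> carrier_mat n k \<and> M * V = V * X \<and>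
      mat_image E \<subseteq> mat_image V \<and> mat_image V \<subseteq> mat_kernel H"
    by (intro markov_parameters_zero_imp_invariant_subspace[OF M E H]) blast
next
  assume "\<exists>k X V. X \<in> carrier_mat k k \<and> V \<in> carrier_mat n k \<and> M * V = V * X \<and>
      mat_image E \<subseteq> mat_image V \<and> mat_image V \<subseteq> mat_kernel H"
  then obtain k X V where X: "X \<in> carrier_mat k k" and V: "V \<in> carrier_mat n k"
    and MV: "M * V = V * X" and E_V: "mat_image E \<subseteq> mat_image V"
    and V_H: "mat_image V \<subseteq> mat_kernel H"
    by blast
  show "\<forall>i. H * M ^\<^sub>m i * E = 0\<^sub>m p l"
    using invariant_subspace_imp_markov_parameters_zero[OF M E H V X MV E_V V_H] by blast
qed

section \<open>The impulse response as a power series\<close>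

lemma smult_pow_mat:
  fixes M :: "'a :: comm_ring_1 mat"
  assumes M: "M \<in> carrier_mat n n"
  shows "(t \<cdot>\<^sub>m M) ^\<^sub>m k = t ^ k \<cdot>\<^sub>m M ^\<^sub>m k"
proof (induction k)
  case 0
  then show ?case using M by (intro eq_matI) auto
next
  case (Suc k)
  have "(t \<cdot>\<^sub>m M) ^\<^sub>m Suc k = t \<cdot>\<^sub>m (t ^ k \<cdot>\<^sub>m (M ^\<^sub>m k * M))"
    using M by (simp add: Suc mult_smult_assoc_mat[of _ n n _ n] mult_smult_distrib[of _ n n _ n])
  also have "\<dots> = t ^ Suc k \<cdot>\<^sub>m M ^\<^sub>m Suc k"
    by (rule eq_matI) auto
  finally show ?case .
qed

lemma abs_pow_mat_entry_le:
  fixes M :: "real mat"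
  assumes M: "M \<in> carrier_mat n n" and a: "a < n" and b: "b < n"
  shows "\<bar>(M ^\<^sub>m k) $$ (a, b)\<bar> \<le> (\<Sum>x<n. \<Sum>y<n. \<bar>M $$ (x, y)\<bar>) ^ k"
  using b
proof (induction k arbitrary: b)
  case 0
  then show ?case using a M by (auto simp: one_mat_def)
next
  case (Suc k)
  define C where "C = (\<Sum>x<n. \<Sum>y<n. \<bar>M $$ (x, y)\<bar>)"
  have C: "C \<ge> 0" unfolding C_def by (intro sum_nonneg) auto
  have col: "(\<Sum>c<n. \<bar>M $$ (c, b)\<bar>) \<le> C"
    unfolding C_def by (intro sum_mono member_le_sum) (use Suc.prems in auto)
  have "(M ^\<^sub>m Suc k) $$ (a, b) = (\<Sum>c<n. (M ^\<^sub>m k) $$ (a, c) * M $$ (c, b))"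
    using M a Suc.prems by (simp add: scalar_prod_def atLeast0LessThan)
  also have "\<bar>\<dots>\<bar> \<le> (\<Sum>c<n. \<bar>(M ^\<^sub>m k) $$ (a, c)\<bar> * \<bar>M $$ (c, b)\<bar>)"
    by (rule order_trans[OF sum_abs]) (simp add: abs_mult)
  also have "\<dots> \<le> (\<Sum>c<n. C ^ k * \<bar>M $$ (c, b)\<bar>)"
    by (intro sum_mono mult_right_mono) (use Suc.IH in \<open>auto simp: C_def\<close>)
  also have "\<dots> \<le> C ^ k * C"
    using mult_left_mono[OF col, of "C ^ k"] C by (simp add: sum_distrib_left)
  finally show ?case by (simp add: C_def mult_ac)
qed

lemma mat_exp_smult_entry_sums:
  fixes M :: "real mat"
  assumes M: "M \<in> carrier_mat n n" and a: "a < n" and b: "b < n"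
  shows "(\<lambda>k. t ^ k / fact k * (M ^\<^sub>m k) $$ (a, b)) sums mat_exp (t \<cdot>\<^sub>m M) $$ (a, b)"
proof -
  define C where "C = (\<Sum>x<n. \<Sum>y<n. \<bar>M $$ (x, y)\<bar>)"
  have "summable (\<lambda>k. t ^ k / fact k * (M ^\<^sub>m k) $$ (a, b))"
  proof (rule summable_comparison_test'[OF summable_exp[of "C * \<bar>t\<bar>"]])
    fix k
    have "norm (t ^ k / fact k * (M ^\<^sub>m k) $$ (a, b)) = \<bar>t\<bar> ^ k / fact k * \<bar>(M ^\<^sub>m k) $$ (a, b)\<bar>"
      by (simp add: abs_mult power_abs)
    also have "\<dots> \<le> \<bar>t\<bar> ^ k / fact k * C ^ k"
      unfolding C_def by (rule mult_left_mono[OF abs_pow_mat_entry_le[OF M a b]]) simp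
    also have "\<dots> = inverse (fact k) * (C * \<bar>t\<bar>) ^ k"
      by (simp add: power_mult_distrib divide_inverse mult_ac)
    finally show "norm (t ^ k / fact k * (M ^\<^sub>m k) $$ (a, b)) \<le> inverse (fact k) * (C * \<bar>t\<bar>) ^ k" .
  qed
  moreover have "mat_exp (t \<cdot>\<^sub>m M) $$ (a, b) = (\<Sum>k. t ^ k / fact k * (M ^\<^sub>m k) $$ (a, b))"
    using M a b by (simp add: mat_exp_def smult_pow_mat[OF M])
  ultimately show ?thesis by (simp add: summable_sums)
qed

lemma index_mult_mat_mult:
  fixes P S Q :: "'a :: comm_semiring_0 mat"
  assumes "P \<in> carrier_mat p n" and "S \<in> carrier_mat n m" and "Q \<in> carrier_mat m l"
    and "i < p" and "j < l"
  shows "(P * S * Q) $$ (i, j) = (\<Sum>a<n. \<Sum>b<m. P $$ (i, a) * S $$ (a, b) * Q $$ (b, j))"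
  using assms by (simp add: scalar_prod_def atLeast0LessThan sum_distrib_left mult.assoc)

lemma sums_mat_mult_entry:
  fixes P Q L :: "'a :: real_normed_field mat" and S :: "nat \<Rightarrow> 'a mat"
  assumes P: "P \<in> carrier_mat p n" and S: "\<And>k. S k \<in> carrier_mat n m" and L: "L \<in> carrier_mat n m"
    and Q: "Q \<in> carrier_mat m l"
    and sums: "\<And>a b. a < n \<Longrightarrow> b < m \<Longrightarrow> (\<lambda>k. S k $$ (a, b)) sums L $$ (a, b)"
    and i: "i < p" and j: "j < l"
  shows "(\<lambda>k. (P * S k * Q) $$ (i, j)) sums (P * L * Q) $$ (i, j)"
proof -
  have "(\<lambda>k. \<Sum>a<n. \<Sum>b<m. P $$ (i, a) * S k $$ (a, b) * Q $$ (b, j)) sums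
      (\<Sum>a<n. \<Sum>b<m. P $$ (i, a) * L $$ (a, b) * Q $$ (b, j))"
    by (intro sums_sum sums_mult sums_mult2 sums) auto
  then show ?thesis using index_mult_mat_mult[OF P S Q i j] index_mult_mat_mult[OF P L Q i j] by simp
qed

lemma impulse_response_entry_sums:
  fixes H M E :: "real mat"
  assumes H: "H \<in> carrier_mat p n" and M: "M \<in> carrier_mat n n" and E: "E \<in> carrier_mat n l"
    and i: "i < p" and j: "j < l"
  shows "(\<lambda>k. (H * M ^\<^sub>m k * E) $$ (i, j) / fact k * t ^ k) sums
    (H * mat_exp (t \<cdot>\<^sub>m M) * E) $$ (i, j)"
proof -
  have exp: "mat_exp (t \<cdot>\<^sub>m M) \<in> carrier_mat n n" using M by (simp add: mat_exp_def)
  have "(\<lambda>k. (H * ((t ^ k / fact k) \<cdot>\<^sub>m M ^\<^sub>m k) * E) $$ (i, j)) sums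
      (H * mat_exp (t \<cdot>\<^sub>m M) * E) $$ (i, j)"
    by (rule sums_mat_mult_entry[OF H _ exp E _ i j]) (use M mat_exp_smult_entry_sums[OF M] in auto)
  moreover have "(H * ((t ^ k / fact k) \<cdot>\<^sub>m M ^\<^sub>m k) * E) $$ (i, j) =
      (H * M ^\<^sub>m k * E) $$ (i, j) / fact k * t ^ k" for k
    using H M E i j by (simp add: mult_smult_distrib[of H p n _ n] mult_smult_assoc_mat[of _ p n E l])
  ultimately show ?thesis by simp
qed

section \<open>Vanishing of the H2 norm\<close>

lemma powser_zero_on_nonneg_imp_coeff_zero:
  fixes c :: "nat \<Rightarrow> real"
  assumes "\<And>x. summable (\<lambda>n. c n * x ^ n)" and "\<And>x. x \<ge> 0 \<Longrightarrow> (\<Sum>n. c n * x ^ n) = 0"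
  shows "c k = 0"
  using assms
proof (induction k arbitrary: c)
  case 0
  then show ?case by (metis order_refl powser_zero)
next
  case (Suc k)
  have "(\<Sum>n. diffs c n * x ^ n) = 0" if x: "x \<ge> 0" for x
  proof -
    \<comment> \<open>Differentiate within [x, oo), where the series vanishes identically.\<close>
    have "((\<lambda>x. \<Sum>n. c n * x ^ n) has_field_derivative (\<Sum>n. diffs c n * x ^ n)) (at x within {x..})"
      using termdiffs_strong_converges_everywhere[OF Suc.prems(1)] by (rule has_field_derivative_at_within)
    then have "((\<lambda>_. 0) has_field_derivative (\<Sum>n. diffs c n * x ^ n)) (at x within {x..})"
      by (rule has_field_derivative_transform_within[where d = 1]) (use Suc.prems(2) x in auto)
    then show ?thesis
      using has_field_derivative_unique[OF _ DERIV_const] trivial_limit_at_right_real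
      by (metis at_within_Ici_at_right)
  qed
  then have "diffs c k = 0" using Suc.IH termdiff_converges_all[OF Suc.prems(1)] by blast
  then show ?case by (simp add: diffs_def del: of_nat_Suc)
qed

lemma continuous_nonneg_eq_0_if_nn_integral_Ici_eq_0:
  fixes f :: "real \<Rightarrow> real"
  assumes cont: "continuous_on UNIV f" and nonneg: "\<And>t. f t \<ge> 0"
    and int0: "(\<integral>\<^sup>+ t \<in> {0..}. ennreal (f t) \<partial>lborel) = 0" and t: "t \<ge> 0"
  shows "f t = 0"
proof -
  have "(\<lambda>t. ennreal (f t) * indicator {0..} t) \<in> borel_measurable lborel"
    using borel_measurable_continuous_onI[OF cont] by measurable
  then have "AE t in lborel. ennreal (f t) * indicator {0..} t = 0"
    using int0 by (simp add: nn_integral_0_iff_AE)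
  then have "AE t \<in> {0<..} in lebesgue. t \<in> {t. f t \<le> 0}"
    by (intro AE_completion) (auto elim!: eventually_mono simp: indicator_def ennreal_eq_0_iff)
  then have "f s \<le> 0" if "s \<in> {0<..}" for s
    using mem_closed_if_AE_lebesgue_open[OF open_greaterThan closed_Collect_le[OF cont continuous_on_const]]
      that by blast
  then have "f s = 0" if "s \<in> {0<..}" for s
    using nonneg[of s] that by (meson greaterThan_iff order_antisym)
  moreover have "continuous_on (closure {0<..}) f"
    using cont by (rule continuous_on_subset) simp
  ultimately show ?thesis
    using continuous_constant_on_closure[of "{0<..}" f 0 t] t by simp
qed

lemma mat_trace_transpose_mult_self:
  assumes "G \<in> carrier_mat p l"
  shows "mat_trace (G\<^sup>T * G) = (\<Sum>j<l. \<Sum>i<p. (G $$ (i, j))\<^sup>2)"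
  unfolding mat_trace_def using assms
  by (intro sum.cong) (auto simp: scalar_prod_def atLeast0LessThan power2_eq_square)

lemma mat_trace_transpose_mult_self_eq_0_iff:
  assumes G: "G \<in> carrier_mat p l"
  shows "mat_trace (G\<^sup>T * G) = 0 \<longleftrightarrow> G = 0\<^sub>m p l"
proof -
  have "mat_trace (G\<^sup>T * G) = 0 \<longleftrightarrow> (\<forall>j<l. \<forall>i<p. G $$ (i, j) = 0)"
    unfolding mat_trace_transpose_mult_self[OF G]
    by (simp add: sum_nonneg_eq_0_iff sum_nonneg Ball_def)
  also have "\<dots> \<longleftrightarrow> G = 0\<^sub>m p l"
    using G by (auto simp: mat_eq_iff)
  finally show ?thesis .
qed

lemma H2_norm_sq_eq_0_iff_markov_parameters_zero:
  fixes H M E :: "real mat"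
  assumes H: "H \<in> carrier_mat p n" and M: "M \<in> carrier_mat n n" and E: "E \<in> carrier_mat n l"
  shows "H2_norm_sq (\<lambda>t. H * mat_exp (t \<cdot>\<^sub>m M) * E) = 0 \<longleftrightarrow>
    (\<forall>k. H * M ^\<^sub>m k * E = 0\<^sub>m p l)"
proof -
  define g where "g t = H * mat_exp (t \<cdot>\<^sub>m M) * E" for t
  define c where "c i j k = (H * M ^\<^sub>m k * E) $$ (i, j) / fact k" for i j k
  have g: "g t \<in> carrier_mat p l" for t
    using H M E unfolding g_def by (auto simp: mat_exp_def)
  have entry_sums: "(\<lambda>k. c i j k * t ^ k) sums g t $$ (i, j)" if "i < p" "j < l" for i j t
    unfolding c_def g_def using impulse_response_entry_sums[OF H M E that] .
  then have summable: "summable (\<lambda>k. c i j k * t ^ k)" if "i < p" "j < l" for i j t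
    using that sums_summable by blast
  have g_eq_0_iff: "g t = 0\<^sub>m p l \<longleftrightarrow> (\<forall>i<p. \<forall>j<l. (\<Sum>k. c i j k * t ^ k) = 0)" for t
    using g[of t] entry_sums by (auto simp: mat_eq_iff sums_iff)
  define q where "q t = mat_trace ((g t)\<^sup>T * g t)" for t
  have q_nonneg: "q t \<ge> 0" for t
    unfolding q_def mat_trace_transpose_mult_self[OF g] by (intro sum_nonneg) auto
  have q_eq: "q t = (\<Sum>j<l. \<Sum>i<p. (\<Sum>k. c i j k * t ^ k)\<^sup>2)" for t
    unfolding q_def mat_trace_transpose_mult_self[OF g]
    by (intro sum.cong refl) (simp add: sums_unique[OF entry_sums])
  have q_cont: "continuous_on UNIV q"
    unfolding q_eq[abs_def]
    by (intro continuous_on_sum continuous_on_power continuous_at_imp_continuous_on ballI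
        isCont_powser_converges_everywhere summable) auto
  have "H2_norm_sq g = 0 \<longleftrightarrow> (\<forall>t\<ge>0. q t = 0)"
  proof
    assume "H2_norm_sq g = 0"
    then show "\<forall>t\<ge>0. q t = 0"
      using continuous_nonneg_eq_0_if_nn_integral_Ici_eq_0[OF q_cont q_nonneg]
      unfolding H2_norm_sq_def q_def[symmetric] by blast
  next
    assume q0: "\<forall>t\<ge>0. q t = 0"
    have "(\<lambda>t. ennreal (q t) * indicator {0..} t) = (\<lambda>_. 0)"
      using q0 by (auto simp: indicator_def fun_eq_iff)
    then show "H2_norm_sq g = 0" unfolding H2_norm_sq_def q_def[symmetric] by simp
  qed
  also have "\<dots> \<longleftrightarrow> (\<forall>i<p. \<forall>j<l. \<forall>k. c i j k = 0)"
  proof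
    assume "\<forall>t\<ge>0. q t = 0"
    then have "(\<Sum>k. c i j k * t ^ k) = 0" if "i < p" "j < l" "t \<ge> 0" for i j t
      using that unfolding q_def mat_trace_transpose_mult_self_eq_0_iff[OF g] g_eq_0_iff by blast
    then show "\<forall>i<p. \<forall>j<l. \<forall>k. c i j k = 0"
      using powser_zero_on_nonneg_imp_coeff_zero summable by blast
  next
    assume "\<forall>i<p. \<forall>j<l. \<forall>k. c i j k = 0"
    then show "\<forall>t\<ge>0. q t = 0"
      unfolding q_def mat_trace_transpose_mult_self_eq_0_iff[OF g] g_eq_0_iff by simp
  qed
  also have "\<dots> \<longleftrightarrow> (\<forall>k. H * M ^\<^sub>m k * E = 0\<^sub>m p l)"
  proof -
    have "H * M ^\<^sub>m k * E \<in> carrier_mat p l" for k using H M E by auto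
    then show ?thesis using H E by (auto simp: c_def mat_eq_iff)
  qed
  finally show ?thesis unfolding g_def .
qed

lemma closed_loop_invariance_iff:
  fixes A B F V X :: "'a :: comm_ring_1 mat"
  assumes A: "A \<in> carrier_mat n n" and B: "B \<in> carrier_mat n m" and F: "F \<in> carrier_mat m n"
    and V: "V \<in> carrier_mat n k" and X: "X \<in> carrier_mat k k"
  shows "V * X - B * F * V = A * V \<longleftrightarrow> (A + B * F) * V = V * X"
proof -
  have "(A + B * F) * V = A * V + B * F * V"
    using A B F V by (simp add: add_mult_distrib_mat[of A n n "B * F" V k])
  then show ?thesis
    using A B F V X by (auto simp: mat_eq_iff algebra_simps)
qed

theorem lemma1:
  fixes A B E H F :: "real mat" and n m l p :: nat
  assumes "A \<in> carrier_mat n n" and "B \<in> carrier_mat n m" and "E \<in> carrier_mat n l"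
    and "H \<in> carrier_mat p n" and "F \<in> carrier_mat m n"
  shows "H2_norm_sq (impulse_response A B E H F) = 0 \<longleftrightarrow>
    (\<exists>(k::nat) X V. X \<in> carrier_mat k k \<and> V \<in> carrier_mat n k \<and>
       V * X - B * F * V = A * V \<and>
       mat_image E \<subseteq> mat_image V \<and> mat_image V \<subseteq> mat_kernel H)"
proof -
  have M: "A + B * F \<in> carrier_mat n n" using assms by auto
  have "H2_norm_sq (impulse_response A B E H F) = 0 \<longleftrightarrow>
      (\<forall>i. H * (A + B * F) ^\<^sub>m i * E = 0\<^sub>m p l)"
    unfolding impulse_response_def
    using H2_norm_sq_eq_0_iff_markov_parameters_zero[OF assms(4) M assms(3)] .
  also have "\<dots> \<longleftrightarrow> (\<exists>k X V. X \<in> carrier_mat k k \<and> V \<in> carrier_mat n k \<and>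
      (A + B * F) * V = V * X \<and> mat_image E \<subseteq> mat_image V \<and> mat_image V \<subseteq> mat_kernel H)"
    using markov_parameters_zero_iff_invariant_subspace[OF M assms(3,4)] .
  also have "\<dots> \<longleftrightarrow> (\<exists>k X V. X \<in> carrier_mat k k \<and> V \<in> carrier_mat n k \<and>
      V * X - B * F * V = A * V \<and> mat_image E \<subseteq> mat_image V \<and> mat_image V \<subseteq> mat_kernel H)"
    by (intro ex_cong1) (use closed_loop_invariance_iff[OF assms(1,2,5)] in blast)
  finally show ?thesis .
qed

end
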